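(* Assume $\sigma^2=0$, and let $g(\underline\phi)=\sum_{(l,k)}\alpha_{lk}\beta_{llk}^2\phi_{lk}^HD_l^{-1}\phi_{lk}$ with $D_l=\sum_{(i,j)}\beta_{lij}\phi_{ij}\phi_{ij}^H$, defined on the open set of pilot collections for which every $D_l$ is invertible. Let $\underline{\tilde\phi}$ be a stationary point of $g$ (unconstrained, i.e. with zero gradient) in this set with every $\tilde\phi_{lk}\neq 0$, and set $\delta=\min_{(l,k)}\sqrt{\tau P_{\max}}/\|\tilde\phi_{lk}\|$ and $\phi^\star_{lk}=\delta\tilde\phi_{lk}$ for all $(l,k)$. Then $\underline\phi^\star$ satisfies $\|\phi^\star_{lk}\|^2\le\tau P_{\max}$ for all $(l,k)$ and is a stationary (KKT) point of the problem of maximizing $g$ subject to $\|\phi_{lk}\|^2\le\tau P_{\max}$ for all $(l,k)$.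
   Context: $L$ cells indexed by $l,i$, each with $K$ users indexed by $k,j$; sums over $(i,j)$ or $(l,k)$ range over all $LK$ users. Pilot length $\tau$, power budget $P_{\max}>0$, large-scale fading coefficients $\beta_{lij}>0$, weights $\alpha_{lk}>0$, pilots $\phi_{lk}\in\mathbb C^\tau$. *)

theory Defs
  imports "HOL-Analysis.Analysis"
begin

text \<open>Cells are indexed by the finite type 'c (L = CARD('c)), users within a cell by the
finite type 'u (K = CARD('u)); a user is a pair (l,k) :: 'c \<times> 'u. Pilots live in
complex ^ 't with tau = CARD('t). A pilot collection is Phi :: (complex ^ 't) ^ ('c \<times> 'u),
with Phi $ (l,k) the pilot of user k in cell l. beta l (i,j) is beta_{lij}.\<close>

definition Dmat :: "('c::finite \<Rightarrow> 'c \<times> 'u::finite \<Rightarrow> real) \<Rightarrow> (complex ^ 't::finite) ^ ('c \<times> 'u) \<Rightarrow> 'c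
    \<Rightarrow> complex ^ 't ^ 't" where
  "Dmat beta Phi l = (\<chi> a b. \<Sum>ij\<in>UNIV. complex_of_real (beta l ij) * (Phi $ ij $ a) * cnj (Phi $ ij $ b))"

definition herm_form :: "complex ^ 't::finite \<Rightarrow> complex ^ 't ^ 't \<Rightarrow> complex ^ 't \<Rightarrow> complex" where
  "herm_form x M y = (\<Sum>a\<in>UNIV. \<Sum>b\<in>UNIV. cnj (x $ a) * (M $ a $ b) * (y $ b))"

text \<open>The objective g (with sigma^2 = 0). The quantity is real on the domain where every
D_l is invertible (D_l Hermitian positive definite); we take its real part.\<close>
definition gobj :: "('c::finite \<times> 'u::finite \<Rightarrow> real) \<Rightarrow> ('c \<Rightarrow> 'c \<times> 'u \<Rightarrow> real)
    \<Rightarrow> (complex ^ 't::finite) ^ ('c \<times> 'u) \<Rightarrow> real" where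
  "gobj alpha beta Phi = (\<Sum>lk\<in>UNIV. alpha lk * (beta (fst lk) lk)^2 *
       Re (herm_form (Phi $ lk) (matrix_inv (Dmat beta Phi (fst lk))) (Phi $ lk)))"

definition gdomain :: "('c::finite \<Rightarrow> 'c \<times> 'u::finite \<Rightarrow> real) \<Rightarrow> ((complex ^ 't::finite) ^ ('c \<times> 'u)) set" where
  "gdomain beta = {Phi. \<forall>l. invertible (Dmat beta Phi l)}"

definition KKT_point_max :: "('v::real_normed_vector \<Rightarrow> real) \<Rightarrow> ('i::finite \<Rightarrow> 'v \<Rightarrow> real) \<Rightarrow> 'v \<Rightarrow> bool" where
  "KKT_point_max f c x \<longleftrightarrow> (\<forall>i. c i x \<le> 0) \<and>
     (\<exists>mu::'i \<Rightarrow> real. (\<forall>i. mu i \<ge> 0) \<and> (\<forall>i. mu i * c i x = 0) \<and>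
        ((\<lambda>y. f y - (\<Sum>i\<in>UNIV. mu i * c i y)) has_derivative (\<lambda>h. 0)) (at x))"

definition power_constr :: "real \<Rightarrow> real \<Rightarrow> 'c::finite \<times> 'u::finite \<Rightarrow> (complex ^ 't::finite) ^ ('c \<times> 'u) \<Rightarrow> real" where
  "power_constr tau Pmax lk Phi = (norm (Phi $ lk))^2 - tau * Pmax"

end

theory Submission imports Defs begin

text \<open>Both \<open>D\<^sub>l\<close> and each \<open>\<phi>\<^sub>l\<^sub>k\<close> enter \<open>g\<close> quadratically, with \<open>D\<^sub>l\<close> inverted, so \<open>g\<close> is
invariant under scaling all pilots by a common \<open>c \<noteq> 0\<close>; the domain is an open cone. Hence a
zero gradient at \<open>\<phi>\<close> gives a zero gradient at \<open>\<delta>\<phi>\<close>, and the choice of \<open>\<delta>\<close> makes \<open>\<delta>\<phi>\<close>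
feasible, so \<open>\<delta>\<phi>\<close> is a KKT point with all multipliers zero.\<close>

lemma matrix_inv_unique:
  fixes A :: "'a::semiring_1^'n::finite^'n"
  assumes "A ** B = mat 1" "B ** A = mat 1"
  shows "matrix_inv A = B"
proof -
  have inv: "A ** matrix_inv A = mat 1"
    unfolding matrix_inv_def by (rule someI2[of _ B]) (use assms in auto)
  have "matrix_inv A = (B ** A) ** matrix_inv A" using assms by (simp add: matrix_mul_lid)
  also have "\<dots> = B ** (A ** matrix_inv A)" by (simp add: matrix_mul_assoc)
  also have "\<dots> = B" using inv by (simp add: matrix_mul_rid)
  finally show ?thesis .
qed

lemma
  fixes A :: "'a::real_field^'n::finite^'n"
  assumes "invertible A" "k \<noteq> 0"
  shows invertible_scaleR: "invertible (k *\<^sub>R A)"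
    and matrix_inv_scaleR: "matrix_inv (k *\<^sub>R A) = inverse k *\<^sub>R matrix_inv A"
proof -
  obtain B where B: "A ** B = mat 1" "B ** A = mat 1"
    using assms(1) unfolding invertible_def by blast
  have left: "(k *\<^sub>R A) ** (inverse k *\<^sub>R B) = mat 1"
    and right: "(inverse k *\<^sub>R B) ** (k *\<^sub>R A) = mat 1"
    using assms(2) by (simp_all add: matrix_scalar_ac B flip: scalar_matrix_assoc)
  then show "invertible (k *\<^sub>R A)" unfolding invertible_def by blast
  show "matrix_inv (k *\<^sub>R A) = inverse k *\<^sub>R matrix_inv A"
    using matrix_inv_unique[OF left right] matrix_inv_unique[OF B] by simp
qed

lemma Dmat_scaleR: "Dmat beta (c *\<^sub>R Phi) l = c\<^sup>2 *\<^sub>R Dmat beta Phi l"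
  unfolding Dmat_def vec_eq_iff
  by (simp add: sum_distrib_left algebra_simps power2_eq_square scaleR_conv_of_real[where 'a=complex])

lemma herm_form_scaleR:
  "c \<noteq> 0 \<Longrightarrow> herm_form (c *\<^sub>R x) (inverse (c\<^sup>2) *\<^sub>R M) (c *\<^sub>R x) = herm_form x M x"
  unfolding herm_form_def
  by (simp add: scaleR_conv_of_real[where 'a=complex] sum_distrib_left power2_eq_square field_simps)

lemma scaleR_in_gdomain: "Phi \<in> gdomain beta \<Longrightarrow> c \<noteq> 0 \<Longrightarrow> c *\<^sub>R Phi \<in> gdomain beta"
  unfolding gdomain_def by (simp add: Dmat_scaleR invertible_scaleR)

lemma gobj_scaleR:
  assumes "Phi \<in> gdomain beta" "c \<noteq> 0"
  shows "gobj alpha beta (c *\<^sub>R Phi) = gobj alpha beta Phi"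
proof -
  have "matrix_inv (Dmat beta (c *\<^sub>R Phi) l) = inverse (c\<^sup>2) *\<^sub>R matrix_inv (Dmat beta Phi l)" for l
    using assms unfolding gdomain_def by (simp add: Dmat_scaleR matrix_inv_scaleR)
  then show ?thesis
    unfolding gobj_def vector_scaleR_component by (simp add: herm_form_scaleR assms(2))
qed

lemma open_gdomain: "open (gdomain beta :: ((complex ^ 't::finite) ^ ('c::finite \<times> 'u::finite)) set)"
proof -
  let ?nonsingular = "\<lambda>l. {Phi :: (complex ^ 't) ^ ('c \<times> 'u). det (Dmat beta Phi l) \<noteq> 0}"
  have "continuous_on UNIV (\<lambda>Phi. det (Dmat beta Phi l))" for l
    unfolding det_def Dmat_def by (auto intro!: continuous_intros)
  then have "open (?nonsingular l)" for l
    by (intro open_Collect_neq continuous_on_const)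
  moreover have "gdomain beta = (\<Inter>l. ?nonsingular l)"
    unfolding gdomain_def by (auto simp: invertible_det_nz)
  ultimately show ?thesis by (auto intro: open_INT)
qed

lemma has_derivative_zero_scaleR_invariant:
  fixes f :: "'a::real_normed_vector \<Rightarrow> 'b::real_normed_vector"
  assumes "open S" "x \<in> S" "c \<noteq> 0"
    and cone: "\<And>y t. y \<in> S \<Longrightarrow> t \<noteq> 0 \<Longrightarrow> t *\<^sub>R y \<in> S"
    and invariant: "\<And>y t. y \<in> S \<Longrightarrow> t \<noteq> 0 \<Longrightarrow> f (t *\<^sub>R y) = f y"
    and "(f has_derivative (\<lambda>h. 0)) (at x)"
  shows "(f has_derivative (\<lambda>h. 0)) (at (c *\<^sub>R x))"
proof -
  have "((\<lambda>y. inverse c *\<^sub>R y) has_derivative (\<lambda>y. inverse c *\<^sub>R y)) (at (c *\<^sub>R x))"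
    by (intro derivative_intros)
  then have "((\<lambda>y. f (inverse c *\<^sub>R y)) has_derivative (\<lambda>h. 0)) (at (c *\<^sub>R x))"
    using diff_chain_at[of _ _ "c *\<^sub>R x" f "\<lambda>h. 0"] assms(3,6) by (simp add: o_def)
  moreover have "f (inverse c *\<^sub>R y) = f y" if "y \<in> S" for y
    using invariant[OF that] assms(3) by simp
  ultimately show ?thesis
    using has_derivative_transform_within_open assms(1-4) by blast
qed

lemma KKT_point_max_if_has_derivative_zero:
  assumes "\<And>i. c i x \<le> 0" "(f has_derivative (\<lambda>h. 0)) (at x)"
  shows "KKT_point_max f c x"
  unfolding KKT_point_max_def using assms by (intro conjI exI[of _ "\<lambda>_. 0"]) auto

lemma
  fixes v :: "'a::real_normed_vector ^ 'i::finite" and r :: real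
  defines "d \<equiv> Min (range (\<lambda>i. r / norm (v $ i)))"
  assumes "r > 0" "\<And>i. v $ i \<noteq> 0"
  shows Min_norm_ratio_pos: "d > 0"
    and norm_scaleR_Min_norm_ratio_le: "norm ((d *\<^sub>R v) $ i) \<le> r"
proof -
  have "d \<in> range (\<lambda>i. r / norm (v $ i))" unfolding d_def by (intro Min_in) auto
  then show "d > 0" using assms(2,3) by auto
  moreover have "d \<le> r / norm (v $ i)" unfolding d_def by (intro Min_le) auto
  ultimately show "norm ((d *\<^sub>R v) $ i) \<le> r"
    using assms(3)[of i] by (simp add: field_simps)
qed

theorem proposition3:
  fixes alpha :: "'c::finite \<times> 'u::finite \<Rightarrow> real"
    and beta :: "'c \<Rightarrow> 'c \<times> 'u \<Rightarrow> real"
    and Pmax :: real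
    and Phit :: "(complex ^ 't::finite) ^ ('c \<times> 'u)"
  assumes Pmax_pos: "Pmax > 0"
    and beta_pos: "\<And>l ij. beta l ij > 0"
    and alpha_pos: "\<And>lk. alpha lk > 0"
    and in_dom: "Phit \<in> gdomain beta"
    and stationary: "(gobj alpha beta has_derivative (\<lambda>h. 0)) (at Phit)"
    and nonzero: "\<And>lk. Phit $ lk \<noteq> 0"
  defines "Phis \<equiv> Min (range (\<lambda>lk. sqrt (real CARD('t) * Pmax) / norm (Phit $ lk))) *\<^sub>R Phit"
  shows "(\<forall>lk. (norm (Phis $ lk))^2 \<le> real CARD('t) * Pmax) \<and>
         KKT_point_max (gobj alpha beta) (power_constr (real CARD('t)) Pmax) Phis"
proof -
  let ?r = "sqrt (real CARD('t) * Pmax)"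
  have r_pos: "?r > 0" using Pmax_pos by simp
  have feasible: "(norm (Phis $ lk))\<^sup>2 \<le> real CARD('t) * Pmax" for lk
  proof -
    have "norm (Phis $ lk) \<le> ?r"
      unfolding Phis_def using norm_scaleR_Min_norm_ratio_le[OF r_pos nonzero] .
    then have "(norm (Phis $ lk))\<^sup>2 \<le> ?r\<^sup>2" by (simp add: power_mono)
    then show ?thesis using Pmax_pos by simp
  qed
  have "Min (range (\<lambda>lk. ?r / norm (Phit $ lk))) \<noteq> 0"
    by (rule Min_norm_ratio_pos[OF r_pos nonzero, THEN less_imp_neq, THEN not_sym])
  then have "(gobj alpha beta has_derivative (\<lambda>h. 0)) (at Phis)"
    unfolding Phis_def
    by (rule has_derivative_zero_scaleR_invariant[OF open_gdomain in_dom _ _ _ stationary])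
      (simp_all add: scaleR_in_gdomain gobj_scaleR)
  moreover have "power_constr (real CARD('t)) Pmax lk Phis \<le> 0" for lk
    using feasible[of lk] by (simp add: power_constr_def)
  ultimately show ?thesis
    using feasible KKT_point_max_if_has_derivative_zero by blast
qed

end
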